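(* Let $(X,\Psi)$ be a $\sigma$-compact uniform space and $Y\subseteq X$. The following are equivalent: (1) $X$ satisfies $\textsf{S}_1(\Omega,\Omega_Y)$; (2) ONE has no winning strategy in the game ${\sf G}_1(\Omega,\Omega_Y)$ on $X$.
   Context: A uniformity on $X$ is a filter $\Psi$ on $X\times X$ whose members contain the diagonal, closed under $U\mapsto U^{-1}$, such that for each $U\in\Psi$ there is $V\in\Psi$ with $V\circ V\subseteq U$, and with intersection equal to the diagonal; $X$ has the topology with neighbourhood bases $\{U(x):U\in\Psi\}$, $U(x)=\{y:(x,y)\in U\}$. $\sigma$-compact: countable union of compact sets. $\Omega$: $\omega$-covers of $X$ (open covers $\mathcal{U}$ with $X\notin\mathcal{U}$ such that each finite subset of $X$ lies in some member). $\Omega_Y$: families of open subsets of $X$, none containing $Y$, such that each finite subset of $Y$ lies in some member. $\textsf{S}_1(\mathcal{A},\mathcal{B})$: for every sequence $(O_n)$ of elements of $\mathcal{A}$ there are $T_n\in O_n$ with $\{T_n\}\in\mathcal{B}$. Game ${\sf G}_1(\mathcal{A},\mathcal{B})$: in inning $n$ ONE chooses $O_n\in\mathcal{A}$, TWO responds with $T_n\in O_n$; TWO wins if $\{T_n:n\in\mathbb{N}\}\in\mathcal{B}$, else ONE wins. *)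

theory Defs
  imports "HOL-Analysis.Analysis"
begin

text \<open>The uniform space is the type class uniform_space: the filter uniformity
  on pairs, with the topology induced by it (open_uniformity).\<close>

definition sigma_compact_space :: "'a::topological_space itself \<Rightarrow> bool" where
  "sigma_compact_space _ \<longleftrightarrow>
     (\<exists>K :: nat \<Rightarrow> 'a set. (\<forall>n. compact (K n)) \<and> (\<Union>n. K n) = UNIV)"

definition omega_covers :: "'a::topological_space set set set" where
  "omega_covers = {\<U>. (\<forall>U\<in>\<U>. open U) \<and> \<Union>\<U> = UNIV \<and> UNIV \<notin> \<U> \<and>
      (\<forall>F. finite F \<longrightarrow> (\<exists>U\<in>\<U>. F \<subseteq> U))}"

definition omega_covers_of :: "'a::topological_space set \<Rightarrow> 'a set set set" where
  "omega_covers_of Y = {\<U>. (\<forall>U\<in>\<U>. open U) \<and> (\<forall>U\<in>\<U>. \<not> Y \<subseteq> U) \<and>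
      (\<forall>F. finite F \<and> F \<subseteq> Y \<longrightarrow> (\<exists>U\<in>\<U>. F \<subseteq> U))}"

definition S1 :: "'b set set \<Rightarrow> 'b set set \<Rightarrow> bool" where
  "S1 A B \<longleftrightarrow> (\<forall>Os :: nat \<Rightarrow> 'b set. (\<forall>n. Os n \<in> A) \<longrightarrow>
      (\<exists>T :: nat \<Rightarrow> 'b. (\<forall>n. T n \<in> Os n) \<and> range T \<in> B))"

text \<open>A strategy for ONE in G_1(A,B) maps the list of TWO's previous moves
  [T_0,...,T_(n-1)] to ONE's move O_n in A. It is winning if every play
  following it is lost by TWO.\<close>
definition ONE_winning_strategy_G1 :: "'b set set \<Rightarrow> 'b set set \<Rightarrow> ('b list \<Rightarrow> 'b set) \<Rightarrow> bool" where
  "ONE_winning_strategy_G1 A B \<sigma> \<longleftrightarrow> (\<forall>s. \<sigma> s \<in> A) \<and>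
     (\<forall>T :: nat \<Rightarrow> 'b. (\<forall>n. T n \<in> \<sigma> (map T [0..<n])) \<longrightarrow> range T \<notin> B)"

definition ONE_has_winning_strategy_G1 :: "'b set set \<Rightarrow> 'b set set \<Rightarrow> bool" where
  "ONE_has_winning_strategy_G1 A B \<longleftrightarrow> (\<exists>\<sigma>. ONE_winning_strategy_G1 A B \<sigma>)"

end

theory Submission
  imports Defs
begin

(* If S_1(Omega, Omega_Y) fails, ONE wins by playing a sequence witnessing the failure.
   Conversely, when points are closed the omega-cover {X - {p} | p not in Y} has only members
   containing Y, so S_1(Omega, Omega_Y) forces X - Y to be finite. Exhaust X by compact sets
   L_0, L_1, ... and fix a strategy of ONE. By compactness, ONE's move after a history s of
   length m can be shrunk to a finite family C(s) of sets containing X - Y that still has, for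
   every set of at most m points of L_m, a member containing it. Only finitely many histories
   of length k follow C, so choosing a member of C(s) for each of them and intersecting gives
   an open set, and over the levels k of any infinite set these intersections form an
   omega-cover. Apply S_1 to the omega-covers belonging to the infinitely many disjoint
   infinite fibres of a pairing function: this gives sets W_n, each an intersection taken at
   some level of the n-th fibre. At that level TWO answers with the member used for W_n in
   the intersection, so every W_n lies in one of TWO's moves; as these moves are proper open
   sets containing X - Y, they form an element of Omega_Y. *)

lemma not_S1_imp_ONE_has_winning_strategy_G1:
  assumes "\<not> S1 A B"
  shows "ONE_has_winning_strategy_G1 A B"
proof -
  obtain Os :: "nat \<Rightarrow> _" where Os: "\<And>n. Os n \<in> A"
    and lost: "\<And>T. (\<forall>n. T n \<in> Os n) \<Longrightarrow> range T \<notin> B"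
    using assms unfolding S1_def by blast
  have "ONE_winning_strategy_G1 A B (\<lambda>s. Os (length s))"
    unfolding ONE_winning_strategy_G1_def using Os lost by simp
  then show ?thesis
    unfolding ONE_has_winning_strategy_G1_def by blast
qed

lemma separated_uniformity_imp_closed_singleton:
  fixes p :: "'a::uniform_space"
  assumes separated: "\<And>x y :: 'a. (\<forall>P. eventually P uniformity \<longrightarrow> P (x, y)) \<Longrightarrow> x = y"
  shows "closed {p}"
  unfolding closed_def open_uniformity
proof
  fix x assume "x \<in> - {p}"
  then obtain E where E: "eventually E uniformity" "\<not> E (x, p)"
    using separated by force
  show "eventually (\<lambda>(x', y). x' = x \<longrightarrow> y \<in> - {p}) uniformity"
    using E(1) by (rule eventually_mono) (use E(2) in auto)
qed

lemma S1_omega_covers_imp_finite_Compl: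
  fixes Y :: "'a::topological_space set"
  assumes closed_singleton: "\<And>p :: 'a. closed {p}"
    and S: "S1 (omega_covers :: 'a set set set) (omega_covers_of Y)"
  shows "finite (- Y)"
proof (rule ccontr)
  assume infinite: "infinite (- Y)"
  define \<U> where "\<U> = {- {p} | p. p \<notin> Y}"
  have \<U>_omega: "\<exists>U\<in>\<U>. F \<subseteq> U" if F: "finite F" for F
  proof -
    have "infinite (- Y - F)"
      using infinite F by simp
    then obtain p where "p \<in> - Y - F"
      using infinite_imp_nonempty by blast
    then show ?thesis unfolding \<U>_def by blast
  qed
  have "\<U> \<in> omega_covers"
    unfolding omega_covers_def
  proof (intro CollectI conjI allI impI ballI)
    show "open U" if "U \<in> \<U>" for U
      using that closed_singleton unfolding \<U>_def by auto
    show "\<Union>\<U> = UNIV"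
      using \<U>_omega[of "{_}"] by blast
  qed (use \<U>_omega in \<open>auto simp: \<U>_def\<close>)
  then obtain T :: "nat \<Rightarrow> 'a set" where "T 0 \<in> \<U>" "range T \<in> omega_covers_of Y"
    using S[unfolded S1_def, rule_format, of "\<lambda>_. \<U>"] by blast
  moreover from \<open>T 0 \<in> \<U>\<close> have "Y \<subseteq> T 0"
    unfolding \<U>_def by blast
  ultimately show False
    unfolding omega_covers_of_def by blast
qed

lemma sigma_compact_space_exhaustion:
  assumes "sigma_compact_space TYPE('a)"
  obtains L :: "nat \<Rightarrow> 'a::topological_space set"
  where "\<And>m. compact (L m)" "\<And>F. finite F \<Longrightarrow> \<exists>N. \<forall>m\<ge>N. F \<subseteq> L m"
proof -
  obtain K :: "nat \<Rightarrow> 'a set" where K: "\<And>n. compact (K n)" "(\<Union>n. K n) = UNIV"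
    using assms unfolding sigma_compact_space_def by blast
  then obtain idx where idx: "\<And>x. x \<in> K (idx x)"
    by (metis UNIV_I UN_E)
  have "compact (\<Union>i\<le>m. K i)" for m
    using K(1) by (intro compact_UN) auto
  moreover have "\<exists>N. \<forall>m\<ge>N. F \<subseteq> (\<Union>i\<le>m. K i)" if "finite F" for F
  proof (intro exI allI impI subsetI)
    fix m x assume "Max (idx ` F) \<le> m" "x \<in> F"
    then have "idx x \<le> m"
      using that by (meson Max_ge finite_imageI imageI le_trans)
    then show "x \<in> (\<Union>i\<le>m. K i)"
      using idx by blast
  qed
  ultimately show thesis
    by (rule that[of "\<lambda>m. \<Union>i\<le>m. K i"])
qed

definition covers_small_subsets :: "'a set set \<Rightarrow> 'a set \<Rightarrow> 'a set \<Rightarrow> nat \<Rightarrow> bool" where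
  "covers_small_subsets \<U> A K m \<longleftrightarrow>
     (\<forall>F. finite F \<and> F \<subseteq> K \<and> card F \<le> m \<longrightarrow> (\<exists>U\<in>\<U>. A \<union> F \<subseteq> U))"

lemma covers_small_subsetsD:
  "covers_small_subsets \<U> A K m \<Longrightarrow> finite F \<Longrightarrow> F \<subseteq> K \<Longrightarrow> card F \<le> m \<Longrightarrow>
    \<exists>U\<in>\<U>. A \<union> F \<subseteq> U"
  unfolding covers_small_subsets_def by blast

lemma covers_small_subsets_superset: "covers_small_subsets \<U> A K m \<Longrightarrow> \<exists>U\<in>\<U>. A \<subseteq> U"
  using covers_small_subsetsD[of \<U> A K m "{}"] by simp

lemma covers_small_subsets_mono:
  "covers_small_subsets \<C> A K m \<Longrightarrow> \<C> \<subseteq> \<D> \<Longrightarrow> covers_small_subsets \<D> A K m"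
  unfolding covers_small_subsets_def by (meson subsetD)

lemma covers_small_subsets_0: "covers_small_subsets \<U> A K 0 \<longleftrightarrow> (\<exists>U\<in>\<U>. A \<subseteq> U)"
proof -
  have "finite F \<and> F \<subseteq> K \<and> card F \<le> 0 \<longleftrightarrow> F = {}" for F :: "'a set"
    by auto
  then show ?thesis
    unfolding covers_small_subsets_def by simp
qed

lemma covers_small_subsets_SucD:
  assumes \<U>: "covers_small_subsets \<U> A K (Suc m)" and "x \<in> K"
  shows "covers_small_subsets \<U> (insert x A) K m"
  unfolding covers_small_subsets_def
proof (intro allI impI)
  fix F assume "finite F \<and> F \<subseteq> K \<and> card F \<le> m"
  with \<open>x \<in> K\<close> have "finite (insert x F)" "insert x F \<subseteq> K" "card (insert x F) \<le> Suc m"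
    by (auto simp: card_insert_if)
  then obtain U where "U \<in> \<U>" "A \<union> insert x F \<subseteq> U"
    using covers_small_subsetsD[OF \<U>] by blast
  then show "\<exists>U\<in>\<U>. insert x A \<union> F \<subseteq> U"
    by blast
qed

lemma covers_small_subsets_SucI:
  assumes "U \<in> \<U>" "A \<subseteq> U" and insert: "\<And>x. x \<in> K \<Longrightarrow> covers_small_subsets \<U> (insert x A) K m"
  shows "covers_small_subsets \<U> A K (Suc m)"
  unfolding covers_small_subsets_def
proof (intro allI impI)
  fix F assume F: "finite F \<and> F \<subseteq> K \<and> card F \<le> Suc m"
  show "\<exists>U\<in>\<U>. A \<union> F \<subseteq> U"
  proof (cases "F = {}")
    case True
    with assms(1,2) show ?thesis
      by auto
  next
    case False
    then obtain y where "y \<in> F"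
      by blast
    with F have "finite (F - {y})" "F - {y} \<subseteq> K" "card (F - {y}) \<le> m" "y \<in> K"
      by auto
    then obtain U where "U \<in> \<U>" "insert y A \<union> (F - {y}) \<subseteq> U"
      using covers_small_subsetsD[OF insert] by blast
    with \<open>y \<in> F\<close> show ?thesis
      by blast
  qed
qed

lemma covers_small_subsets_insert_nearby:
  assumes \<C>: "covers_small_subsets \<C> (insert x A) K m" and y: "y \<in> \<Inter>{C \<in> \<C>. x \<in> C}"
  shows "covers_small_subsets \<C> (insert y A) K m"
  unfolding covers_small_subsets_def
proof (intro allI impI)
  fix F assume "finite F \<and> F \<subseteq> K \<and> card F \<le> m"
  then obtain U where "U \<in> \<C>" "insert x A \<union> F \<subseteq> U"
    using covers_small_subsetsD[OF \<C>] by blast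
  with y show "\<exists>U\<in>\<C>. insert y A \<union> F \<subseteq> U"
    by blast
qed

lemma compact_covers_small_subsets_finite_subfamily:
  fixes K :: "'a::topological_space set"
  assumes K: "compact K" and open_\<U>: "\<And>U. U \<in> \<U> \<Longrightarrow> open U"
    and "covers_small_subsets \<U> A K m"
  shows "\<exists>\<C>\<subseteq>\<U>. finite \<C> \<and> covers_small_subsets \<C> A K m"
  using assms(3)
proof (induction m arbitrary: A)
  case 0
  then obtain U where "U \<in> \<U>" "A \<subseteq> U"
    by (auto dest: covers_small_subsets_superset)
  then show ?case
    by (intro exI[of _ "{U}"]) (auto simp: covers_small_subsets_0)
next
  case (Suc m)
  obtain U\<^sub>0 where U\<^sub>0: "U\<^sub>0 \<in> \<U>" "A \<subseteq> U\<^sub>0"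
    using covers_small_subsets_superset[OF Suc.prems] by blast
  have "\<exists>\<C>\<subseteq>\<U>. finite \<C> \<and> covers_small_subsets \<C> (insert x A) K m" if "x \<in> K" for x
    by (rule Suc.IH[OF covers_small_subsets_SucD[OF Suc.prems that]])
  then obtain \<C> where \<C>: "\<And>x. x \<in> K \<Longrightarrow>
      \<C> x \<subseteq> \<U> \<and> finite (\<C> x) \<and> covers_small_subsets (\<C> x) (insert x A) K m"
    by metis
  define N where "N x = \<Inter>{C \<in> \<C> x. x \<in> C}" for x
  have "open (N x)" if "x \<in> K" for x
    unfolding N_def using \<C>[OF that] open_\<U> by (intro open_Inter) auto
  moreover have "K \<subseteq> (\<Union>x\<in>K. N x)"
    unfolding N_def by auto
  ultimately obtain D where D: "D \<subseteq> K" "finite D" "K \<subseteq> (\<Union>x\<in>D. N x)"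
    using compactE_image[OF K, of K N] by metis
  define \<D> where "\<D> = insert U\<^sub>0 (\<Union>x\<in>D. \<C> x)"
  have "covers_small_subsets \<D> A K (Suc m)"
  proof (rule covers_small_subsets_SucI)
    show "U\<^sub>0 \<in> \<D>" "A \<subseteq> U\<^sub>0"
      using U\<^sub>0 by (simp_all add: \<D>_def)
    fix y assume "y \<in> K"
    then obtain x where x: "x \<in> D" "y \<in> N x"
      using D by blast
    with D \<C> have "covers_small_subsets (\<C> x) (insert x A) K m"
      by blast
    then have "covers_small_subsets (\<C> x) (insert y A) K m"
      using x(2) unfolding N_def by (rule covers_small_subsets_insert_nearby)
    then show "covers_small_subsets \<D> (insert y A) K m"
      by (rule covers_small_subsets_mono) (use x in \<open>auto simp: \<D>_def\<close>)
  qed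
  moreover have "\<D> \<subseteq> \<U>"
    unfolding \<D>_def using U\<^sub>0 \<C> D by blast
  moreover have "finite \<D>"
    unfolding \<D>_def using \<C> D by auto
  ultimately show ?case
    by blast
qed

lemma omega_cover_finite_subfamily:
  assumes \<U>: "\<U> \<in> omega_covers" and K: "compact K" and P: "finite P"
  shows "\<exists>\<C>\<subseteq>\<U>. finite \<C> \<and> (\<forall>U\<in>\<C>. P \<subseteq> U) \<and> covers_small_subsets \<C> P K m"
proof -
  have "covers_small_subsets \<U> P K m"
    unfolding covers_small_subsets_def
  proof (intro allI impI)
    fix F assume "finite F \<and> F \<subseteq> K \<and> card F \<le> m"
    with P have "finite (P \<union> F)"
      by blast
    with \<U> show "\<exists>U\<in>\<U>. P \<union> F \<subseteq> U"
      unfolding omega_covers_def by blast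
  qed
  moreover have "\<And>U. U \<in> \<U> \<Longrightarrow> open U"
    using \<U> unfolding omega_covers_def by blast
  ultimately have "\<exists>\<C>\<subseteq>\<U>. finite \<C> \<and> covers_small_subsets \<C> P K m"
    using K by (intro compact_covers_small_subsets_finite_subfamily)
  then obtain \<C> where "\<C> \<subseteq> \<U>" "finite \<C>" "covers_small_subsets \<C> P K m"
    by blast
  then show ?thesis
    by (intro exI[of _ "{U \<in> \<C>. P \<subseteq> U}"]) (auto simp: covers_small_subsets_def)
qed

primrec partial_plays :: "('b list \<Rightarrow> 'b set) \<Rightarrow> nat \<Rightarrow> 'b list set" where
  "partial_plays C 0 = {[]}"
| "partial_plays C (Suc k) = (\<lambda>(s, c). s @ [c]) ` (SIGMA s:partial_plays C k. C s)"

lemma length_partial_plays: "s \<in> partial_plays C k \<Longrightarrow> length s = k"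
  by (induction k arbitrary: s) auto

lemma finite_partial_plays: "(\<And>s. finite (C s)) \<Longrightarrow> finite (partial_plays C k)"
  by (induction k) auto

lemma partial_plays_nonempty: "(\<And>s. C s \<noteq> {}) \<Longrightarrow> partial_plays C k \<noteq> {}"
  by (induction k) auto

lemma prefix_in_partial_plays:
  "(\<And>i. i < k \<Longrightarrow> T i \<in> C (map T [0..<i])) \<Longrightarrow> map T [0..<k] \<in> partial_plays C k"
proof (induction k)
  case (Suc k)
  then have "(map T [0..<k], T k) \<in> (SIGMA s:partial_plays C k. C s)"
    by simp
  then show ?case
    by (auto intro: image_eqI[of _ _ "(map T [0..<k], T k)"])
qed simp

definition level_intersections :: "('a set list \<Rightarrow> 'a set set) \<Rightarrow> nat \<Rightarrow> 'a set set" where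
  "level_intersections C k =
     {\<Inter>s\<in>partial_plays C k. c s | c. \<forall>s\<in>partial_plays C k. c s \<in> C s}"

lemma course_of_values_sequence:
  obtains T :: "nat \<Rightarrow> 'b" where "\<And>n. T n = \<tau> (map T [0..<n])"
proof -
  define h where "h = rec_nat [] (\<lambda>_ h. h @ [\<tau> h])"
  have h: "h n = map (\<lambda>i. \<tau> (h i)) [0..<n]" for n
    by (induction n) (simp_all add: h_def)
  show thesis
    by (intro that[of "\<lambda>n. \<tau> (h n)"]) (rule arg_cong[OF h])
qed

lemma level_intersections_open_proper:
  assumes finite_C: "\<And>s. finite (C s)" and C_nonempty: "\<And>s. C s \<noteq> {}"
    and open_proper: "\<And>s U. U \<in> C s \<Longrightarrow> open U \<and> U \<noteq> UNIV"
    and V: "V \<in> level_intersections C k"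
  shows "open V \<and> V \<noteq> UNIV"
proof -
  obtain c where V: "V = (\<Inter>s\<in>partial_plays C k. c s)"
    and c: "\<And>s. s \<in> partial_plays C k \<Longrightarrow> c s \<in> C s"
    using V unfolding level_intersections_def by blast
  obtain s\<^sub>0 where "s\<^sub>0 \<in> partial_plays C k"
    using partial_plays_nonempty[of C, OF C_nonempty] by blast
  then have "V \<subseteq> c s\<^sub>0" "c s\<^sub>0 \<noteq> UNIV"
    using V c open_proper by auto
  moreover have "open V"
    unfolding V using c open_proper by (intro open_INT finite_partial_plays finite_C) auto
  ultimately show ?thesis
    by auto
qed

lemma level_intersections_superset:
  assumes "\<And>s. length s = k \<Longrightarrow> \<exists>U\<in>C s. F \<subseteq> U"
  shows "\<exists>V\<in>level_intersections C k. F \<subseteq> V"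
proof -
  define c where "c s = (SOME U. U \<in> C s \<and> F \<subseteq> U)" for s
  have c: "c s \<in> C s \<and> F \<subseteq> c s" if "s \<in> partial_plays C k" for s
  proof -
    have "\<exists>U. U \<in> C s \<and> F \<subseteq> U"
      using assms length_partial_plays[OF that] by blast
    then show ?thesis
      unfolding c_def by (rule someI_ex)
  qed
  have "(\<Inter>s\<in>partial_plays C k. c s) \<in> level_intersections C k"
    unfolding level_intersections_def
    by (intro CollectI exI[of _ c] conjI refl ballI) (use c in blast)
  moreover have "F \<subseteq> (\<Inter>s\<in>partial_plays C k. c s)"
    using c by blast
  ultimately show ?thesis
    by blast
qed

lemma level_intersections_omega_cover:
  fixes C :: "'a::topological_space set list \<Rightarrow> 'a set set"
  assumes finite_C: "\<And>s. finite (C s)" and C_nonempty: "\<And>s. C s \<noteq> {}"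
    and open_proper: "\<And>s U. U \<in> C s \<Longrightarrow> open U \<and> U \<noteq> UNIV"
    and eventually_cover: "\<And>F. finite F \<Longrightarrow> \<exists>N. \<forall>s. N \<le> length s \<longrightarrow> (\<exists>U\<in>C s. F \<subseteq> U)"
    and I: "infinite I"
  shows "(\<Union>k\<in>I. level_intersections C k) \<in> omega_covers"
proof -
  have member: "open V \<and> V \<noteq> UNIV" if "V \<in> level_intersections C k" for V k
    using finite_C C_nonempty open_proper that by (rule level_intersections_open_proper)
  have cover: "\<exists>V\<in>(\<Union>k\<in>I. level_intersections C k). F \<subseteq> V" if F: "finite F" for F
  proof -
    obtain N where N: "\<And>s. N \<le> length s \<Longrightarrow> \<exists>U\<in>C s. F \<subseteq> U"
      using eventually_cover[OF F] by blast
    obtain k where "k \<in> I" "N \<le> k"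
      using I by (meson infinite_nat_iff_unbounded_le)
    with N have "\<exists>V\<in>level_intersections C k. F \<subseteq> V"
      by (intro level_intersections_superset) auto
    with \<open>k \<in> I\<close> show ?thesis
      by blast
  qed
  have "\<Union>(\<Union>k\<in>I. level_intersections C k) = UNIV"
    using cover[of "{_}"] by blast
  with member cover show ?thesis
    unfolding omega_covers_def by blast
qed

lemma play_containing_level_intersections:
  assumes C_nonempty: "\<And>s. C s \<noteq> {}"
  obtains T where "\<And>k. T k \<in> C (map T [0..<k])"
    and "\<And>k. W k \<in> level_intersections C k \<Longrightarrow> W k \<subseteq> T k"
proof -
  define good where "good s c \<longleftrightarrow> c \<in> C s \<and> (s \<in> partial_plays C (length s) \<and>
      W (length s) \<in> level_intersections C (length s) \<longrightarrow> W (length s) \<subseteq> c)" for s c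
  have "\<exists>c. good s c" for s
  proof (cases "s \<in> partial_plays C (length s) \<and> W (length s) \<in> level_intersections C (length s)")
    case True
    then obtain c where "W (length s) = (\<Inter>s'\<in>partial_plays C (length s). c s')"
      and "\<forall>s'\<in>partial_plays C (length s). c s' \<in> C s'"
      unfolding level_intersections_def by blast
    with True show ?thesis
      unfolding good_def by blast
  next
    case False
    then show ?thesis
      using C_nonempty unfolding good_def by blast
  qed
  then have good: "good s (SOME c. good s c)" for s
    by (rule someI_ex)
  obtain T where T: "\<And>n. T n = (SOME c. good (map T [0..<n]) c)"
    using course_of_values_sequence[of "\<lambda>s. SOME c. good s c"] by blast
  have "good (map T [0..<k]) (T k)" for k
    by (subst T) (rule good)
  then have T_C: "T k \<in> C (map T [0..<k])"
    and T_W: "map T [0..<k] \<in> partial_plays C k \<Longrightarrow> W k \<in> level_intersections C k \<Longrightarrow> W k \<subseteq> T k"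
    for k
    unfolding good_def by auto
  show thesis
  proof (rule that)
    show "T k \<in> C (map T [0..<k])" for k
      by (rule T_C)
    show "W k \<subseteq> T k" if "W k \<in> level_intersections C k" for k
      using T_W prefix_in_partial_plays[of k T C, OF T_C] that by blast
  qed
qed

lemma omega_covers_of_coarsening:
  assumes \<W>: "\<W> \<in> omega_covers_of Y" and refines: "\<And>W. W \<in> \<W> \<Longrightarrow> \<exists>U\<in>\<U>. W \<subseteq> U"
    and open_\<U>: "\<And>U. U \<in> \<U> \<Longrightarrow> open U" and proper_\<U>: "\<And>U. U \<in> \<U> \<Longrightarrow> \<not> Y \<subseteq> U"
  shows "\<U> \<in> omega_covers_of Y"
proof -
  have "\<forall>F. finite F \<and> F \<subseteq> Y \<longrightarrow> (\<exists>W\<in>\<W>. F \<subseteq> W)"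
    using \<W> by (simp add: omega_covers_of_def)
  with refines have "\<exists>U\<in>\<U>. F \<subseteq> U" if "finite F" "F \<subseteq> Y" for F
    using that by (meson order_trans)
  with open_\<U> proper_\<U> show ?thesis
    by (simp add: omega_covers_of_def)
qed

lemma infinite_prod_decode_fibre: "infinite {k. fst (prod_decode k) = n}"
  unfolding infinite_nat_iff_unbounded_le
  by (metis (mono_tags) fst_conv le_prod_encode_2 mem_Collect_eq prod_encode_inverse)

lemma sigma_compact_strategy_finite_refinement:
  fixes \<sigma> :: "'h list \<Rightarrow> 'a::topological_space set set"
  assumes sigma: "sigma_compact_space TYPE('a)"
    and \<sigma>_omega: "\<And>s. \<sigma> s \<in> omega_covers" and P: "finite P"
  obtains C where "\<And>s. C s \<subseteq> \<sigma> s" "\<And>s. finite (C s)" "\<And>s. C s \<noteq> {}"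
    "\<And>s U. U \<in> C s \<Longrightarrow> P \<subseteq> U"
    "\<And>F. finite F \<Longrightarrow> \<exists>N. \<forall>s. N \<le> length s \<longrightarrow> (\<exists>U\<in>C s. F \<subseteq> U)"
proof -
  obtain L :: "nat \<Rightarrow> 'a set" where compact_L: "\<And>m. compact (L m)"
    and exhausting_L: "\<And>F. finite F \<Longrightarrow> \<exists>N. \<forall>m\<ge>N. F \<subseteq> L m"
    using sigma_compact_space_exhaustion[OF sigma] by blast
  define C where "C s = (SOME \<C>. \<C> \<subseteq> \<sigma> s \<and> finite \<C> \<and> (\<forall>U\<in>\<C>. P \<subseteq> U) \<and>
      covers_small_subsets \<C> P (L (length s)) (length s))" for s
  have C: "C s \<subseteq> \<sigma> s \<and> finite (C s) \<and> (\<forall>U\<in>C s. P \<subseteq> U) \<and>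
      covers_small_subsets (C s) P (L (length s)) (length s)" for s
    unfolding C_def by (rule someI_ex) (rule omega_cover_finite_subfamily[OF \<sigma>_omega compact_L P])
  have C_cover: "\<exists>U\<in>C s. F \<subseteq> U"
    if F: "finite F" "F \<subseteq> L (length s)" "card F \<le> length s" for s F
  proof -
    obtain U where "U \<in> C s" "P \<union> F \<subseteq> U"
      using covers_small_subsetsD[of "C s", OF _ F] C[of s] by blast
    then show ?thesis
      by blast
  qed
  show thesis
  proof (rule that)
    show "C s \<subseteq> \<sigma> s" "finite (C s)" for s
      using C[of s] by auto
    show "P \<subseteq> U" if "U \<in> C s" for s U
      using C[of s] that by blast
    show "C s \<noteq> {}" for s
      using C_cover[of "{}" s] by (simp add: ex_in_conv)
    show "\<exists>N. \<forall>s. N \<le> length s \<longrightarrow> (\<exists>U\<in>C s. F \<subseteq> U)" if F: "finite F" for F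
    proof -
      obtain N where N: "\<And>m. N \<le> m \<Longrightarrow> F \<subseteq> L m"
        using exhausting_L[OF F] by blast
      have "\<exists>U\<in>C s. F \<subseteq> U" if "max N (card F) \<le> length s" for s
        using C_cover[of F s] N[of "length s"] F that by simp
      then show ?thesis
        by blast
    qed
  qed
qed

lemma S1_play_through_finite_refinement:
  fixes Y :: "'a::topological_space set" and C :: "'a set list \<Rightarrow> 'a set set"
  assumes S: "S1 (omega_covers :: 'a set set set) (omega_covers_of Y)"
    and C_finite: "\<And>s. finite (C s)" and C_nonempty: "\<And>s. C s \<noteq> {}"
    and C_open_proper: "\<And>s U. U \<in> C s \<Longrightarrow> open U \<and> U \<noteq> UNIV"
    and C_Compl: "\<And>s U. U \<in> C s \<Longrightarrow> - Y \<subseteq> U"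
    and C_eventually_cover: "\<And>F. finite F \<Longrightarrow> \<exists>N. \<forall>s. N \<le> length s \<longrightarrow> (\<exists>U\<in>C s. F \<subseteq> U)"
  shows "\<exists>T. (\<forall>k. T k \<in> C (map T [0..<k])) \<and> range T \<in> omega_covers_of Y"
proof -
  define \<nu> where "\<nu> k = fst (prod_decode k)" for k
  have infinite_fibre: "infinite {k. \<nu> k = n}" for n
    unfolding \<nu>_def by (rule infinite_prod_decode_fibre)
  have "(\<Union>k\<in>{k. \<nu> k = n}. level_intersections C k) \<in> omega_covers" for n
    by (rule level_intersections_omega_cover)
      (fact C_finite C_nonempty C_open_proper C_eventually_cover infinite_fibre)+
  then obtain W where W: "\<And>n. W n \<in> (\<Union>k\<in>{k. \<nu> k = n}. level_intersections C k)"
    and W_Y: "range W \<in> omega_covers_of Y"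
    using S[unfolded S1_def, rule_format, of "\<lambda>n. \<Union>k\<in>{k. \<nu> k = n}. level_intersections C k"]
    by blast
  obtain T where T_C: "\<And>k. T k \<in> C (map T [0..<k])"
    and T_W: "\<And>k. W (\<nu> k) \<in> level_intersections C k \<Longrightarrow> W (\<nu> k) \<subseteq> T k"
    using play_containing_level_intersections[where C = C and W = "\<lambda>k. W (\<nu> k)"] C_nonempty
    by blast
  have "range T \<in> omega_covers_of Y"
  proof (rule omega_covers_of_coarsening[OF W_Y])
    show "\<exists>U\<in>range T. V \<subseteq> U" if "V \<in> range W" for V
    proof -
      obtain n k where "V = W n" "\<nu> k = n" "W n \<in> level_intersections C k"
        using \<open>V \<in> range W\<close> W by blast
      then show ?thesis
        using T_W[of k] by auto
    qed
    fix U assume "U \<in> range T"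
    then obtain s where U: "U \<in> C s"
      using T_C by blast
    then show "open U"
      using C_open_proper by blast
    show "\<not> Y \<subseteq> U"
      using C_Compl[OF U] C_open_proper[OF U] by auto
  qed
  with T_C show ?thesis
    by blast
qed

lemma S1_imp_not_ONE_winning_strategy_G1:
  fixes Y :: "'a::topological_space set"
  assumes S: "S1 (omega_covers :: 'a set set set) (omega_covers_of Y)"
    and finite_Compl: "finite (- Y)" and sigma: "sigma_compact_space TYPE('a)"
  shows "\<not> ONE_winning_strategy_G1 (omega_covers :: 'a set set set) (omega_covers_of Y) \<sigma>"
proof
  assume win: "ONE_winning_strategy_G1 (omega_covers :: 'a set set set) (omega_covers_of Y) \<sigma>"
  then have \<sigma>_omega: "\<sigma> s \<in> omega_covers" for s
    unfolding ONE_winning_strategy_G1_def by blast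
  obtain C where C_sub: "\<And>s. C s \<subseteq> \<sigma> s" and C_finite: "\<And>s. finite (C s)"
    and C_nonempty: "\<And>s. C s \<noteq> {}" and C_Compl: "\<And>s U. U \<in> C s \<Longrightarrow> - Y \<subseteq> U"
    and C_eventually_cover: "\<And>F. finite F \<Longrightarrow> \<exists>N. \<forall>s. N \<le> length s \<longrightarrow> (\<exists>U\<in>C s. F \<subseteq> U)"
    using sigma_compact_strategy_finite_refinement[where \<sigma> = \<sigma>, OF sigma \<sigma>_omega finite_Compl]
    by blast
  have C_open_proper: "open U \<and> U \<noteq> UNIV" if "U \<in> C s" for s U
    using \<sigma>_omega[of s] C_sub[of s] that unfolding omega_covers_def by blast
  have "\<exists>T. (\<forall>k. T k \<in> C (map T [0..<k])) \<and> range T \<in> omega_covers_of Y"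
    using S C_finite C_nonempty C_open_proper C_Compl C_eventually_cover
    by (rule S1_play_through_finite_refinement)
  then obtain T where T_C: "\<And>k. T k \<in> C (map T [0..<k])" and T_Y: "range T \<in> omega_covers_of Y"
    by blast
  have "T k \<in> \<sigma> (map T [0..<k])" for k
    using T_C C_sub by blast
  with win have "range T \<notin> omega_covers_of Y"
    unfolding ONE_winning_strategy_G1_def by blast
  with T_Y show False
    by contradiction
qed

theorem theorem4p5:
  fixes Y :: "'a::uniform_space set"
  assumes separated: "\<And>x y :: 'a. (\<forall>P. eventually P uniformity \<longrightarrow> P (x, y)) \<Longrightarrow> x = y"
    and sigma: "sigma_compact_space TYPE('a)"
  shows "S1 (omega_covers :: 'a set set set) (omega_covers_of Y)
     \<longleftrightarrow> \<not> ONE_has_winning_strategy_G1 (omega_covers :: 'a set set set) (omega_covers_of Y)"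
proof
  assume S: "S1 (omega_covers :: 'a set set set) (omega_covers_of Y)"
  have "closed {p}" for p :: 'a
    by (rule separated_uniformity_imp_closed_singleton) (rule separated)
  then have "finite (- Y)"
    using S by (rule S1_omega_covers_imp_finite_Compl)
  with S sigma show "\<not> ONE_has_winning_strategy_G1 (omega_covers :: 'a set set set) (omega_covers_of Y)"
    unfolding ONE_has_winning_strategy_G1_def using S1_imp_not_ONE_winning_strategy_G1 by blast
next
  assume "\<not> ONE_has_winning_strategy_G1 (omega_covers :: 'a set set set) (omega_covers_of Y)"
  then show "S1 (omega_covers :: 'a set set set) (omega_covers_of Y)"
    using not_S1_imp_ONE_has_winning_strategy_G1 by blast
qed

end
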